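(* Let $G$ be a group and let $S$ be a finite subset of $G$. Let $F$ be a subset of $G$ that is finite or cofinite (i.e. $G\setminus F$ is finite), such that $F\cap S^{-1}=\{1\}$. Then $|(FS)\setminus F|\ge|S|-1$.
   Context: $FS=\{xy : x\in F,\ y\in S\}$ and $S^{-1}=\{s^{-1}: s\in S\}$; $1$ is the identity of $G$. *)

theory Defs
  imports "HOL-Algebra.Coset"
begin

end

theory Submission
  imports Defs
begin

text \<open>
  The finite case is Kemperman's theorem: if \<open>A\<close> and \<open>B\<close> are finite and \<open>A \<inter> B\<inverse> = {1}\<close>,
  then \<open>|AB| \<ge> |A| + |B| - 1\<close>. If \<open>A \<inter> B = {1}\<close> this holds because \<open>A \<union> B \<subseteq> AB\<close>.
  Otherwise pick \<open>g \<in> A \<inter> B\<close>, \<open>g \<noteq> 1\<close>, and pass to \<open>(A \<union> Ag, B \<inter> g\<inverse>B)\<close> or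
  \<open>(A \<inter> Ag\<inverse>, B \<union> gB)\<close>: both pairs satisfy the hypothesis, have product inside \<open>AB\<close>,
  and their size sums add up to \<open>2(|A| + |B|)\<close>. So one of them does not decrease \<open>|A| + |B|\<close>;
  if it is the first one, \<open>|B|\<close> strictly decreases (as \<open>g\<inverse> \<notin> B\<close>). This gives a well-founded
  induction.

  If instead the complement \<open>C\<close> of \<open>F\<close> is finite, let \<open>D = {c \<in> C. cS\<inverse> \<subseteq> C}\<close>. Every
  element of \<open>C - D\<close> lies in \<open>FS - F\<close>, and Kemperman's theorem for \<open>{1} \<union> D\<close> and \<open>S\<inverse>\<close>,
  whose product lies in \<open>{1} \<union> C\<close>, gives \<open>|C| - |D| \<ge> |S| - 1\<close>.
\<close>

lemma set_inv_eq_image: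
  fixes G (structure)
  shows "set_inv B = (\<lambda>b. inv b) ` B"
  unfolding SET_INV_def by blast

lemma set_mult_eq_image:
  fixes G (structure)
  shows "A <#> B = (\<lambda>(a, b). a \<otimes> b) ` (A \<times> B)"
  unfolding set_mult_def by auto

lemma r_coset_eq_image:
  fixes G (structure)
  shows "A #> g = (\<lambda>a. a \<otimes> g) ` A"
  unfolding r_coset_def by blast

lemma l_coset_eq_image:
  fixes G (structure)
  shows "g <# B = (\<lambda>b. g \<otimes> b) ` B"
  unfolding l_coset_def by blast

lemma finite_set_mult:
  fixes G (structure)
  shows "finite A \<Longrightarrow> finite B \<Longrightarrow> finite (A <#> B)"
  unfolding set_mult_eq_image by simp

context group
begin

lemma set_mult_memI: "a \<in> A \<Longrightarrow> b \<in> B \<Longrightarrow> a \<otimes> b \<in> A <#> B"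
  unfolding set_mult_def by blast

lemma subset_set_mult_left: "\<one> \<in> B \<Longrightarrow> A \<subseteq> carrier G \<Longrightarrow> A \<subseteq> A <#> B"
  using set_mult_memI[of _ A \<one> B] by (metis r_one subsetD subsetI)

lemma subset_set_mult_right: "\<one> \<in> A \<Longrightarrow> B \<subseteq> carrier G \<Longrightarrow> B \<subseteq> A <#> B"
  using set_mult_memI[of \<one> A _ B] by (metis l_one subsetD subsetI)

lemma card_set_inv: "B \<subseteq> carrier G \<Longrightarrow> card (set_inv B) = card B"
  unfolding set_inv_eq_image using inv_inj by (metis card_image inj_on_subset)

lemma one_mem_of_Int_set_inv_eq_one:
  assumes "A \<inter> set_inv B = {\<one>}" "B \<subseteq> carrier G"
  shows "\<one> \<in> A" "\<one> \<in> B"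
proof -
  have "\<one> \<in> set_inv B"
    using assms(1) by blast
  then obtain b where "b \<in> B" "\<one> = inv b"
    by (auto simp: set_inv_eq_image)
  moreover have "b \<in> carrier G"
    using \<open>b \<in> B\<close> assms(2) by blast
  ultimately have "b = \<one>"
    by (metis inv_eq_1_iff)
  with \<open>b \<in> B\<close> assms(1) show "\<one> \<in> A" "\<one> \<in> B"
    by auto
qed

lemma Un_subset_set_mult:
  assumes "A \<inter> set_inv B = {\<one>}" "A \<subseteq> carrier G" "B \<subseteq> carrier G"
  shows "A \<union> B \<subseteq> A <#> B"
  using one_mem_of_Int_set_inv_eq_one[OF assms(1,3)] assms(2,3)
  by (simp add: subset_set_mult_left subset_set_mult_right)

lemma card_Un_r_coset_add_card_stable:
  assumes "finite A" "A \<subseteq> carrier G" "g \<in> carrier G"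
  shows "card (A \<union> (A #> g)) + card {a \<in> A. a \<otimes> g \<in> A} = 2 * card A"
proof -
  have inj: "inj_on (\<lambda>a. a \<otimes> g) A"
    using inj_on_multc[OF assms(3)] assms(2) by (rule inj_on_subset)
  have "card {a \<in> A. a \<otimes> g \<in> A} = card ((\<lambda>a. a \<otimes> g) ` {a \<in> A. a \<otimes> g \<in> A})"
    by (rule card_image[symmetric], rule inj_on_subset[OF inj]) auto
  also have "(\<lambda>a. a \<otimes> g) ` {a \<in> A. a \<otimes> g \<in> A} = A \<inter> (A #> g)"
    by (auto simp: r_coset_eq_image)
  finally have "card {a \<in> A. a \<otimes> g \<in> A} = card (A \<inter> (A #> g))" .
  moreover have "finite (A #> g)" "card (A #> g) = card A"
    unfolding r_coset_eq_image using assms(1) inj by (simp_all add: card_image)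
  ultimately show ?thesis
    using card_Un_Int[OF assms(1), of "A #> g"] by simp
qed

lemma card_Un_l_coset_add_card_stable:
  assumes "finite B" "B \<subseteq> carrier G" "g \<in> carrier G"
  shows "card (B \<union> (g <# B)) + card {b \<in> B. g \<otimes> b \<in> B} = 2 * card B"
proof -
  have inj: "inj_on (\<lambda>b. g \<otimes> b) B"
    using inj_on_cmult[OF assms(3)] assms(2) by (rule inj_on_subset)
  have "card {b \<in> B. g \<otimes> b \<in> B} = card ((\<lambda>b. g \<otimes> b) ` {b \<in> B. g \<otimes> b \<in> B})"
    by (rule card_image[symmetric], rule inj_on_subset[OF inj]) auto
  also have "(\<lambda>b. g \<otimes> b) ` {b \<in> B. g \<otimes> b \<in> B} = B \<inter> (g <# B)"
    by (auto simp: l_coset_eq_image)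
  finally have "card {b \<in> B. g \<otimes> b \<in> B} = card (B \<inter> (g <# B))" .
  moreover have "finite (g <# B)" "card (g <# B) = card B"
    unfolding l_coset_eq_image using assms(1) inj by (simp_all add: card_image)
  ultimately show ?thesis
    using card_Un_Int[OF assms(1), of "g <# B"] by simp
qed

lemma ex_mult_notin:
  assumes "finite B" "B \<subseteq> carrier G" "\<one> \<in> B" "g \<in> carrier G" "inv g \<notin> B"
  shows "\<exists>b \<in> B. g \<otimes> b \<notin> B"
proof (rule ccontr)
  assume "\<not> ?thesis"
  then have "(\<lambda>b. g \<otimes> b) ` B \<subseteq> B"
    by blast
  moreover have "card ((\<lambda>b. g \<otimes> b) ` B) = card B"
    using inj_on_cmult[OF assms(4)] assms(2) by (metis card_image inj_on_subset)
  ultimately have "(\<lambda>b. g \<otimes> b) ` B = B"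
    using assms(1) by (rule card_subset_eq[rotated])
  then obtain b where "b \<in> B" "\<one> = g \<otimes> b"
    using assms(3) by (metis imageE)
  then have "b = inv g"
    using assms(2,4) by (metis inv_equality inv_inv inv_closed subsetD)
  with \<open>b \<in> B\<close> assms(5) show False
    by simp
qed

lemma set_mult_left_transform_subset:
  assumes "A \<subseteq> carrier G" "B \<subseteq> carrier G" "g \<in> carrier G"
  shows "(A \<union> (A #> g)) <#> {b \<in> B. g \<otimes> b \<in> B} \<subseteq> A <#> B"
proof
  fix x
  assume "x \<in> (A \<union> (A #> g)) <#> {b \<in> B. g \<otimes> b \<in> B}"
  then obtain h b where h: "h \<in> A \<union> (A #> g)" and b: "b \<in> B" "g \<otimes> b \<in> B" and x: "x = h \<otimes> b"
    unfolding set_mult_def by blast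
  show "x \<in> A <#> B"
  proof (cases "h \<in> A")
    case True
    with b x show ?thesis by (blast intro: set_mult_memI)
  next
    case False
    then obtain a where a: "a \<in> A" "h = a \<otimes> g"
      using h by (auto simp: r_coset_eq_image)
    then have "x = a \<otimes> (g \<otimes> b)"
      using x b assms by (auto simp: m_assoc subset_iff)
    with a b show ?thesis by (blast intro: set_mult_memI)
  qed
qed

lemma set_mult_right_transform_subset:
  assumes "A \<subseteq> carrier G" "B \<subseteq> carrier G" "g \<in> carrier G"
  shows "{a \<in> A. a \<otimes> g \<in> A} <#> (B \<union> (g <# B)) \<subseteq> A <#> B"
proof
  fix x
  assume "x \<in> {a \<in> A. a \<otimes> g \<in> A} <#> (B \<union> (g <# B))"
  then obtain a k where a: "a \<in> A" "a \<otimes> g \<in> A" and k: "k \<in> B \<union> (g <# B)" and x: "x = a \<otimes> k"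
    unfolding set_mult_def by blast
  show "x \<in> A <#> B"
  proof (cases "k \<in> B")
    case True
    with a x show ?thesis by (blast intro: set_mult_memI)
  next
    case False
    then obtain b where b: "b \<in> B" "k = g \<otimes> b"
      using k by (auto simp: l_coset_eq_image)
    then have "x = (a \<otimes> g) \<otimes> b"
      using x a assms by (auto simp: m_assoc subset_iff)
    with a b show ?thesis by (blast intro: set_mult_memI)
  qed
qed

lemma inv_eq_one_of_Int_set_inv:
  assumes "A \<inter> set_inv B = {\<one>}" "b \<in> B" "inv b \<in> A"
  shows "inv b = \<one>"
proof -
  have "inv b \<in> set_inv B"
    using assms(2) by (simp add: set_inv_eq_image)
  with assms(1,3) show ?thesis
    by blast
qed

lemma left_transform_Int_set_inv:
  assumes "A \<subseteq> carrier G" "B \<subseteq> carrier G" "A \<inter> set_inv B = {\<one>}"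
    and "g \<in> A" "g \<in> B" "g \<noteq> \<one>"
  shows "(A \<union> (A #> g)) \<inter> set_inv {b \<in> B. g \<otimes> b \<in> B} = {\<one>}"
proof -
  have one: "\<one> \<in> A" "\<one> \<in> B"
    using one_mem_of_Int_set_inv_eq_one assms(2,3) by auto
  have g: "g \<in> carrier G"
    using assms(1,4) by blast
  have "inv b = \<one>" if x: "inv b \<in> A \<union> (A #> g)" and b: "b \<in> B" "g \<otimes> b \<in> B" for b
  proof (cases "inv b \<in> A")
    case True
    with assms(3) b(1) show ?thesis
      by (rule inv_eq_one_of_Int_set_inv)
  next
    case False
    then obtain a where a: "a \<in> A" "inv b = a \<otimes> g"
      using x by (auto simp: r_coset_eq_image)
    have "b \<in> carrier G" "a \<in> carrier G"
      using a b assms(1,2) by auto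
    then have "a = inv (g \<otimes> b)"
      using a(2) g by (simp add: inv_mult_group m_assoc)
    then have "a = \<one>"
      using inv_eq_one_of_Int_set_inv[OF assms(3) b(2)] a(1) by simp
    then have "inv (inv g) \<in> A" "inv g \<in> B"
      using a(2) b(1) \<open>b \<in> carrier G\<close> g assms(4) by auto
    then have "g = \<one>"
      using inv_eq_one_of_Int_set_inv[OF assms(3)] g by simp
    with assms(6) show ?thesis ..
  qed
  moreover have "\<one> \<in> set_inv {b \<in> B. g \<otimes> b \<in> B}"
    using one g assms(5) by (force simp: set_inv_eq_image)
  moreover have "\<one> \<in> A \<union> (A #> g)"
    using one by simp
  ultimately show ?thesis
    by (auto simp: set_inv_eq_image)
qed

lemma right_transform_Int_set_inv:
  assumes "A \<subseteq> carrier G" "B \<subseteq> carrier G" "A \<inter> set_inv B = {\<one>}"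
    and "g \<in> A" "g \<in> B" "g \<noteq> \<one>"
  shows "{a \<in> A. a \<otimes> g \<in> A} \<inter> set_inv (B \<union> (g <# B)) = {\<one>}"
proof -
  have one: "\<one> \<in> A" "\<one> \<in> B"
    using one_mem_of_Int_set_inv_eq_one assms(2,3) by auto
  have g: "g \<in> carrier G"
    using assms(1,4) by blast
  have "inv k = \<one>" if x: "inv k \<in> A" "inv k \<otimes> g \<in> A" and k: "k \<in> B \<union> (g <# B)" for k
  proof (cases "k \<in> B")
    case True
    with assms(3) x(1) show ?thesis
      by (intro inv_eq_one_of_Int_set_inv)
  next
    case False
    then obtain b where b: "b \<in> B" "k = g \<otimes> b"
      using k by (auto simp: l_coset_eq_image)
    have "b \<in> carrier G"
      using b assms(2) by auto
    then have "inv k \<otimes> g = inv b"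
      using b(2) g by (simp add: inv_mult_group m_assoc)
    then have "inv b = \<one>"
      using inv_eq_one_of_Int_set_inv[OF assms(3) b(1)] x(2) by simp
    then have "inv k = inv g"
      using b(2) g \<open>b \<in> carrier G\<close> by simp
    then have "inv g = \<one>"
      using inv_eq_one_of_Int_set_inv[OF assms(3) assms(5)] x(1) by simp
    with g assms(6) show ?thesis
      by simp
  qed
  moreover have "\<one> \<in> set_inv (B \<union> (g <# B))"
    using one by (force simp: set_inv_eq_image)
  moreover have "\<one> \<in> {a \<in> A. a \<otimes> g \<in> A}"
    using one g assms(4) by simp
  ultimately show ?thesis
    by (auto simp: set_inv_eq_image)
qed

lemma kemperman_transform:
  assumes "finite A" "finite B" "A \<subseteq> carrier G" "B \<subseteq> carrier G" "A \<inter> set_inv B = {\<one>}"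
    and "A \<inter> B \<noteq> {\<one>}"
  obtains A' B' where "finite A'" "finite B'" "A' \<subseteq> carrier G" "B' \<subseteq> carrier G"
    "A' \<inter> set_inv B' = {\<one>}" "A' <#> B' \<subseteq> A <#> B"
    "card A + card B \<le> card A' + card B'"
    "card A + card B < card A' + card B' \<or> card B' < card B"
proof -
  have one: "\<one> \<in> A" "\<one> \<in> B"
    using one_mem_of_Int_set_inv_eq_one assms(4,5) by auto
  then obtain g where g: "g \<in> A" "g \<in> B" "g \<noteq> \<one>"
    using assms(6) by blast
  have g_carrier: "g \<in> carrier G"
    using g(1) assms(3) by blast
  define A1 B1 where "A1 = A \<union> (A #> g)" and "B1 = {b \<in> B. g \<otimes> b \<in> B}"
  define A2 B2 where "A2 = {a \<in> A. a \<otimes> g \<in> A}" and "B2 = B \<union> (g <# B)"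
  have fin: "finite A1" "finite B1" "finite A2" "finite B2"
    using assms(1,2) by (simp_all add: A1_def B1_def A2_def B2_def r_coset_eq_image l_coset_eq_image)
  have carrier: "A1 \<subseteq> carrier G" "B1 \<subseteq> carrier G" "A2 \<subseteq> carrier G" "B2 \<subseteq> carrier G"
    using assms(3,4) g_carrier
    by (auto simp: A1_def B1_def A2_def B2_def r_coset_eq_image l_coset_eq_image)
  have "card A1 + card A2 = 2 * card A" "card B2 + card B1 = 2 * card B"
    unfolding A1_def A2_def B1_def B2_def using assms(1-4) g_carrier
    by (simp_all add: card_Un_r_coset_add_card_stable card_Un_l_coset_add_card_stable)
  then consider (left) "card A + card B \<le> card A1 + card B1"
    | (right) "card A + card B < card A2 + card B2"
    by linarith
  then show ?thesis
  proof cases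
    case left
    have "inv g \<notin> B"
      using inv_eq_one_of_Int_set_inv[OF assms(5), of "inv g"] g g_carrier by auto
    then obtain b where "b \<in> B" "g \<otimes> b \<notin> B"
      using ex_mult_notin assms(2,4) one g_carrier by blast
    then have "B1 \<subset> B"
      unfolding B1_def by blast
    then have "card B1 < card B"
      using assms(2) by (rule psubset_card_mono[rotated])
    with left show ?thesis
      using that[OF fin(1,2) carrier(1,2)] assms(3-5) g g_carrier unfolding A1_def B1_def
      by (simp add: left_transform_Int_set_inv set_mult_left_transform_subset)
  next
    case right
    then show ?thesis
      using that[OF fin(3,4) carrier(3,4)] assms(3-5) g g_carrier unfolding A2_def B2_def
      by (simp add: right_transform_Int_set_inv set_mult_right_transform_subset)
  qed
qed

theorem kemperman:
  assumes "finite A" "finite B" "A \<subseteq> carrier G" "B \<subseteq> carrier G" "A \<inter> set_inv B = {\<one>}"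
  shows "card A + card B \<le> card (A <#> B) + 1"
  using assms
proof (induction "(A, B)" arbitrary: A B rule: wf_induct_rule[OF wf_measures[of
      "[\<lambda>(A, B). 2 * card (A <#> B) - (card A + card B), \<lambda>(A, B). card B]"],
      case_names less])
  case (less A B)
  have card_le_set_mult: "card A' \<le> card (A' <#> B')" "card B' \<le> card (A' <#> B')"
    if "finite A'" "finite B'" "A' \<subseteq> carrier G" "B' \<subseteq> carrier G" "A' \<inter> set_inv B' = {\<one>}"
    for A' B'
    using Un_subset_set_mult[OF that(5,3,4)] finite_set_mult[of A' B' G, OF that(1,2)]
    by (auto intro: card_mono)
  show ?case
  proof (cases "A \<inter> B = {\<one>}")
    case True
    have "card (A \<union> B) + 1 = card A + card B"
      using card_Un_Int[OF less.prems(1,2)] True by simp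
    moreover have "card (A \<union> B) \<le> card (A <#> B)"
      using Un_subset_set_mult[OF less.prems(5,3,4)] less.prems(1,2)
      by (intro card_mono finite_set_mult)
    ultimately show ?thesis
      by simp
  next
    case False
    then obtain A' B' where A'B': "finite A'" "finite B'" "A' \<subseteq> carrier G" "B' \<subseteq> carrier G"
        "A' \<inter> set_inv B' = {\<one>}" and sub: "A' <#> B' \<subseteq> A <#> B"
      and grow: "card A + card B \<le> card A' + card B'"
      and progress: "card A + card B < card A' + card B' \<or> card B' < card B"
      using kemperman_transform less.prems by metis
    have le: "card (A' <#> B') \<le> card (A <#> B)"
      using sub less.prems(1,2) by (intro card_mono finite_set_mult)
    have "card A' + card B' \<le> card (A' <#> B') + 1"
    proof (rule less.hyps[OF _ A'B'])
      show "((A', B'), A, B) \<in> measures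
          [\<lambda>(A, B). 2 * card (A <#> B) - (card A + card B), \<lambda>(A, B). card B]"
        using card_le_set_mult[OF A'B'] le grow progress by auto
    qed
    with le grow show ?thesis
      by linarith
  qed
qed

lemma card_set_mult_diff_ge_finite:
  assumes "finite F" "F \<subseteq> carrier G" "finite S" "S \<subseteq> carrier G" "F \<inter> set_inv S = {\<one>}"
  shows "card S - 1 \<le> card ((F <#> S) - F)"
proof -
  have "F \<subseteq> F <#> S"
    using Un_subset_set_mult[OF assms(5,2,4)] by blast
  moreover have "finite (F <#> S)"
    using assms(1,3) by (rule finite_set_mult)
  ultimately have "card ((F <#> S) - F) = card (F <#> S) - card F" "card F \<le> card (F <#> S)"
    by (simp_all add: card_Diff_subset assms(1) card_mono)
  moreover have "card F + card S \<le> card (F <#> S) + 1"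
    using assms by (intro kemperman)
  ultimately show ?thesis
    by linarith
qed

lemma mem_set_mult_diff_if_not_l_coset_subset:
  assumes "c \<in> carrier G - F" "\<not> c <# set_inv S \<subseteq> carrier G - F" "S \<subseteq> carrier G"
  shows "c \<in> (F <#> S) - F"
proof -
  obtain s where s: "s \<in> S" "c \<otimes> inv s \<in> F"
    using assms by (auto simp: l_coset_eq_image set_inv_eq_image)
  then have "c = (c \<otimes> inv s) \<otimes> s"
    using assms(1,3) by (auto simp: m_assoc)
  with s assms(1) show ?thesis
    by (metis DiffD2 DiffI set_mult_memI)
qed

lemma insert_one_stable_set_mult_subset:
  assumes "T \<subseteq> insert \<one> C" "T \<subseteq> carrier G"
  shows "insert \<one> {c \<in> C. c <# T \<subseteq> C} <#> T \<subseteq> insert \<one> C"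
proof
  fix x
  assume "x \<in> insert \<one> {c \<in> C. c <# T \<subseteq> C} <#> T"
  then obtain c t where c: "c \<in> insert \<one> {c \<in> C. c <# T \<subseteq> C}" and t: "t \<in> T" and x: "x = c \<otimes> t"
    unfolding set_mult_def by blast
  show "x \<in> insert \<one> C"
  proof (cases "c = \<one>")
    case True
    have "t \<in> carrier G"
      using t assms(2) by blast
    with True x t assms(1) show ?thesis
      by auto
  next
    case False
    with c t x show ?thesis
      by (auto simp: l_coset_eq_image)
  qed
qed

lemma insert_one_stable_Int_set_inv:
  assumes "\<one> \<notin> C" "\<one> \<in> T" "T \<subseteq> carrier G"
  shows "insert \<one> {c \<in> C. c <# T \<subseteq> C} \<inter> set_inv T = {\<one>}"
proof -
  have "c \<notin> set_inv T" if "c \<in> C" "c <# T \<subseteq> C" for c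
  proof
    assume "c \<in> set_inv T"
    then obtain t where "t \<in> T" "c = inv t"
      by (auto simp: set_inv_eq_image)
    with that assms(3) have "\<one> \<in> c <# T"
      by (force simp: l_coset_eq_image)
    with that(2) assms(1) show False
      by blast
  qed
  moreover have "\<one> \<in> set_inv T"
    using assms(2) by (force simp: set_inv_eq_image)
  ultimately show ?thesis
    by blast
qed

lemma card_set_mult_diff_ge_cofinite:
  assumes "finite (carrier G - F)" "F \<subseteq> carrier G" "finite S" "S \<subseteq> carrier G"
    and "F \<inter> set_inv S = {\<one>}"
  shows "card S - 1 \<le> card ((F <#> S) - F)"
proof -
  define C where "C = carrier G - F"
  define D where "D = {c \<in> C. c <# set_inv S \<subseteq> C}"
  have one: "\<one> \<in> F" "\<one> \<in> set_inv S" "\<one> \<notin> C"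
    using assms(5) by (auto simp: C_def)
  have inv_S: "set_inv S \<subseteq> carrier G" "set_inv S \<subseteq> insert \<one> C" "finite (set_inv S)"
    using assms(3-5) by (auto simp: set_inv_eq_image C_def)
  have "D \<subseteq> C" "\<one> \<notin> D"
    using one(3) by (auto simp: D_def)
  have fin: "finite C" "finite D"
    using assms(1) \<open>D \<subseteq> C\<close> by (auto simp: C_def intro: finite_subset)
  have "C - D \<subseteq> (F <#> S) - F"
  proof
    fix c
    assume "c \<in> C - D"
    with assms(4) show "c \<in> (F <#> S) - F"
      by (intro mem_set_mult_diff_if_not_l_coset_subset) (auto simp: C_def D_def)
  qed
  moreover have "(F <#> S) - F \<subseteq> C"
    using assms(2,4) by (auto simp: C_def set_mult_def)
  ultimately have "card C - card D \<le> card ((F <#> S) - F)"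
    using fin card_mono[of "(F <#> S) - F" "C - D"] card_Diff_subset[OF fin(2) \<open>D \<subseteq> C\<close>]
    by (metis finite_subset)
  moreover have "card (insert \<one> D) + card (set_inv S) \<le> card (insert \<one> D <#> set_inv S) + 1"
    using fin(2) inv_S one(2,3) \<open>D \<subseteq> C\<close> unfolding D_def
    by (intro kemperman insert_one_stable_Int_set_inv) (auto simp: C_def)
  moreover have "card (insert \<one> D <#> set_inv S) \<le> card (insert \<one> C)"
    using fin(1) inv_S unfolding D_def by (intro card_mono insert_one_stable_set_mult_subset) simp_all
  moreover have "card (insert \<one> D) = card D + 1" "card (insert \<one> C) = card C + 1"
    using fin one(3) \<open>\<one> \<notin> D\<close> by simp_all
  moreover have "card D \<le> card C"
    using fin(1) \<open>D \<subseteq> C\<close> by (rule card_mono)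
  ultimately show ?thesis
    using card_set_inv[OF assms(4)] by linarith
qed

end

theorem corollary5p3:
  fixes G (structure) and S F :: "'a set"
  assumes "group G"
    and "S \<subseteq> carrier G" and "finite S"
    and "F \<subseteq> carrier G"
    and "finite F \<or> finite (carrier G - F)"
    and "F \<inter> set_inv S = {\<one>}"
  shows "card ((F <#> S) - F) \<ge> card S - 1"
proof -
  interpret group G by fact
  from assms(5) show ?thesis
    using assms(2-4,6) card_set_mult_diff_ge_finite card_set_mult_diff_ge_cofinite by blast
qed

end
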